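(* Let $(P,\theta)$ be an X-program with $P$ an $n\times l$ binary matrix, let $\mathbf{X}$ be its output random variable, and let $m$ be a projector on $\mathbb{F}_2^l$ with range $R$, such that the range of the dual map $m^*$ is $R^*$. Then for every $\mathbf{x}\in R$, \[ \mathbb{P}[m(\mathbf{X})=\mathbf{x}]=\mathbb{E}_{\mathbf{s}\in R^*}\big[(-1)^{\mathbf{x}\cdot\mathbf{s}}\cdot\alpha_{(P_{\mathbf{s}},2\theta)}\big], \] where $\mathbb{E}_{\mathbf{s}\in R^*}$ denotes the average over $\mathbf{s}$ uniform in $R^*$.
   Context: An X-program $(P,\theta)$: $P$ is an $n\times l$ matrix over $\mathbb{F}_2$, $\theta\in\mathbb{R}$, $\mathbf{H}_P=\sum_{a=1}^n\prod_{b=1}^lX_b^{P_{ab}}$ on $l$ qubits ($X_b$ Pauli $X$ on qubit $b$), and $\mathbf{X}$ is the random variable on $\mathbb{F}_2^l$ with $\mathbb{P}[\mathbf{X}=\mathbf{x}]=|\langle\mathbf{x}|\exp(i\theta\mathbf{H}_P)|\mathbf{0}\rangle|^2$. A projector is a linear map $m:\mathbb{F}_2^l\to\mathbb{F}_2^l$ with $m^2=m$ (not necessarily orthogonal); $K$ and $R$ are its kernel and range, and $m^*$ is its dual (transpose) with respect to the standard inner product $\mathbf{x}\cdot\mathbf{y}$. The marginal distribution is $\mathbb{P}[m(\mathbf{X})=\mathbf{x}]=[\mathbf{x}\in R]\sum_{\mathbf{k}\in K}\mathbb{P}[\mathbf{X}=\mathbf{x}+\mathbf{k}]$. For $\mathbf{s}\in\mathbb{F}_2^l$,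 $P_{\mathbf{s}}$ is the matrix obtained from $P$ by deleting all rows $\mathbf{a}$ with $\mathbf{a}\cdot\mathbf{s}=0$. For a binary matrix $M$ with $n'$ rows and rank $r$, $\mathcal{C}(M)\subseteq\mathbb{F}_2^{n'}$ is the span of its columns, $W_{\mathcal{C}}(\zeta)=\sum_{\mathbf{c}\in\mathcal{C}}\zeta^{|\mathbf{c}|}$ with $|\mathbf{c}|$ the Hamming weight, and $\alpha_{(M,\phi)}=2^{-r}e^{i\phi n'}W_{\mathcal{C}(M)}(e^{-2i\phi})$. *)

theory Defs
  imports Complex_Main
begin

text \<open>Vectors of F_2^l are boolean lists of length l; qubit / coordinate b is list position b.\<close>

definition vecs :: "nat \<Rightarrow> bool list set" where
  "vecs l = {xs. length xs = l}"

definition vxor :: "bool list \<Rightarrow> bool list \<Rightarrow> bool list" where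
  "vxor x y = map2 (\<noteq>) x y"

definition dot :: "bool list \<Rightarrow> bool list \<Rightarrow> bool" where
  "dot x y = odd (card {i. i < length x \<and> x ! i \<and> y ! i})"

definition hweight :: "bool list \<Rightarrow> nat" where
  "hweight c = length (filter id c)"

text \<open>Operators on l qubits as matrices indexed by computational basis states.\<close>
type_synonym cmat = "bool list \<Rightarrow> bool list \<Rightarrow> complex"

definition ident :: cmat where
  "ident x y = (if x = y then 1 else 0)"

definition mat_mult :: "nat \<Rightarrow> cmat \<Rightarrow> cmat \<Rightarrow> cmat" where
  "mat_mult l A B x y = (\<Sum>z\<in>vecs l. A x z * B z y)"

fun mat_pow :: "nat \<Rightarrow> cmat \<Rightarrow> nat \<Rightarrow> cmat" where
  "mat_pow l A 0 = ident"
| "mat_pow l A (Suc k) = mat_mult l A (mat_pow l A k)"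

definition mat_exp :: "nat \<Rightarrow> cmat \<Rightarrow> cmat" where
  "mat_exp l A x y = (\<Sum>k. mat_pow l A k x y / of_nat (fact k))"

definition pauliX :: "nat \<Rightarrow> cmat" where
  "pauliX b x y = (if x = y[b := \<not> y ! b] then 1 else 0)"

definition pauli_string :: "nat \<Rightarrow> bool list \<Rightarrow> cmat" where
  "pauli_string l p = foldr (\<lambda>b A. mat_mult l (if p ! b then pauliX b else ident) A) [0..<l] ident"

definition hamiltonian :: "nat \<Rightarrow> bool list list \<Rightarrow> cmat" where
  "hamiltonian l P x y = (\<Sum>a<length P. pauli_string l (P ! a) x y)"

text \<open>P[X = x] = |<x| exp(i theta H_P) |0>|^2.\<close>
definition xprog_prob :: "nat \<Rightarrow> bool list list \<Rightarrow> real \<Rightarrow> bool list \<Rightarrow> real" where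
  "xprog_prob l P \<theta> x =
     (cmod (mat_exp l (\<lambda>u v. \<i> * complex_of_real \<theta> * hamiltonian l P u v) x (replicate l False)))\<^sup>2"

definition marginal_prob :: "nat \<Rightarrow> bool list list \<Rightarrow> real \<Rightarrow> (bool list \<Rightarrow> bool list) \<Rightarrow> bool list \<Rightarrow> real" where
  "marginal_prob l P \<theta> m x = (\<Sum>y\<in>{y\<in>vecs l. m y = x}. xprog_prob l P \<theta> y)"

definition is_linear_map :: "nat \<Rightarrow> (bool list \<Rightarrow> bool list) \<Rightarrow> bool" where
  "is_linear_map l m \<longleftrightarrow> (\<forall>x\<in>vecs l. m x \<in> vecs l) \<and>
     (\<forall>x\<in>vecs l. \<forall>y\<in>vecs l. m (vxor x y) = vxor (m x) (m y))"

definition is_projector :: "nat \<Rightarrow> (bool list \<Rightarrow> bool list) \<Rightarrow> bool" where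
  "is_projector l m \<longleftrightarrow> is_linear_map l m \<and> (\<forall>x\<in>vecs l. m (m x) = m x)"

definition dual_map :: "nat \<Rightarrow> (bool list \<Rightarrow> bool list) \<Rightarrow> bool list \<Rightarrow> bool list" where
  "dual_map l m z = (THE y. y \<in> vecs l \<and> (\<forall>x\<in>vecs l. dot y x = dot z (m x)))"

definition restrict_rows :: "bool list list \<Rightarrow> bool list \<Rightarrow> bool list list" where
  "restrict_rows P s = filter (\<lambda>a. dot a s) P"

text \<open>Column space of a matrix (given as list of rows, with l columns).\<close>
definition colspace :: "nat \<Rightarrow> bool list list \<Rightarrow> bool list set" where
  "colspace l M = (\<lambda>y. map (\<lambda>r. dot r y) M) ` vecs l"

definition f2_span :: "nat \<Rightarrow> bool list set \<Rightarrow> bool list set" where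
  "f2_span k S = {v. \<exists>T. finite T \<and> T \<subseteq> S \<and> v = Finite_Set.fold vxor (replicate k False) T}"

definition f2_rank :: "nat \<Rightarrow> bool list list \<Rightarrow> nat" where
  "f2_rank l M = Min {card S | S. finite S \<and> S \<subseteq> colspace l M \<and>
                                  f2_span (length M) S = colspace l M}"

definition weight_enum :: "bool list set \<Rightarrow> complex \<Rightarrow> complex" where
  "weight_enum C \<zeta> = (\<Sum>c\<in>C. \<zeta> ^ hweight c)"

definition alpha :: "nat \<Rightarrow> bool list list \<Rightarrow> real \<Rightarrow> complex" where
  "alpha l M \<phi> = complex_of_real (2 powr (- real (f2_rank l M)))
      * exp (\<i> * complex_of_real (\<phi> * real (length M)))
      * weight_enum (colspace l M) (exp (- 2 * \<i> * complex_of_real \<phi>))"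

end

theory Submission
  imports Defs
begin

text \<open>
  The Hamiltonian \<open>H_P\<close> is diagonal in the Hadamard basis, with eigenvalue
  \<open>\<lambda>_P(w) = \<Sum>_a (-1)^(a\<cdot>w)\<close> at \<open>w\<close>. Hence the amplitude of \<open>y\<close> is
  \<open>2^-l \<Sum>_w (-1)^(y\<cdot>w) e^(i\<theta>\<lambda>_P(w))\<close>, and substituting \<open>v = w + s\<close> in its squared modulus gives
  \<open>P[X = y] = 4^-l \<Sum>_s (-1)^(y\<cdot>s) \<Sum>_w e^(2i\<theta>\<lambda>_(P_s)(w))\<close>, because
  \<open>\<lambda>_P(w) - \<lambda>_P(w + s) = 2\<lambda>_(P_s)(w)\<close>. Summing over the fibre \<open>x + ker m\<close> of \<open>m\<close> kills every
  \<open>s\<close> outside the annihilator of \<open>ker m\<close>, which is the range \<open>R\<^sup>*\<close> of \<open>m\<^sup>*\<close>, and multiplies the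
  remaining terms by \<open>|ker m|\<close>. Finally \<open>\<Sum>_w e^(i\<phi>\<lambda>_M(w)) = 2^l \<alpha>_(M,\<phi>)\<close>: grouping \<open>w\<close> by the
  codeword \<open>M w\<close> of weight \<open>k\<close>, where \<open>\<lambda>_M(w) = n' - 2k\<close>, each codeword is hit \<open>2^(l-r)\<close> times;
  and \<open>|ker m| |R\<^sup>*| = 2^l\<close>.
\<close>

section \<open>Vectors over \<open>\<bbbF>\<^sub>2\<close> and characters\<close>

lemma vecs_length: "x \<in> vecs l \<Longrightarrow> length x = l"
  by (simp add: vecs_def)

lemma vecs_Suc: "vecs (Suc k) = (\<lambda>(b, v). b # v) ` (UNIV \<times> vecs k)"
  by (auto simp: vecs_def length_Suc_conv)

lemma finite_vecs [simp]: "finite (vecs k)"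
  by (induct k) (auto simp: vecs_Suc vecs_def[of 0])

lemma card_vecs: "card (vecs k) = 2 ^ k"
  using card_lists_length_eq[of "UNIV :: bool set" k] by (simp add: vecs_def)

lemma sum_vecs_Suc: "(\<Sum>v\<in>vecs (Suc k). f v) = (\<Sum>v\<in>vecs k. f (True # v) + f (False # v))"
proof -
  have "(\<Sum>v\<in>vecs (Suc k). f v) = (\<Sum>(b, v)\<in>UNIV \<times> vecs k. f (b # v))"
    unfolding vecs_Suc by (subst sum.reindex) (auto simp: inj_on_def intro!: sum.cong)
  also have "\<dots> = (\<Sum>v\<in>vecs k. f (True # v) + f (False # v))"
    by (simp add: sum.cartesian_product[symmetric] UNIV_bool sum.distrib add.commute)
  finally show ?thesis .
qed

lemma zero_vecs [simp]: "replicate l False \<in> vecs l"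
  by (simp add: vecs_def)

lemma vxor_vecs [simp]: "u \<in> vecs l \<Longrightarrow> v \<in> vecs l \<Longrightarrow> vxor u v \<in> vecs l"
  by (simp add: vecs_def vxor_def)

lemma vxor_Nil [simp]: "vxor [] w = []" "vxor u [] = []"
  by (auto simp: vxor_def)

lemma vxor_Cons [simp]: "vxor (a # u) (b # w) = (a \<noteq> b) # vxor u w"
  by (simp add: vxor_def)

lemma length_vxor [simp]: "length (vxor u w) = min (length u) (length w)"
  by (simp add: vxor_def)

lemma vxor_commute: "vxor u v = vxor v u"
  unfolding vxor_def by (rule nth_equalityI) auto

lemma vxor_assoc: "vxor (vxor u v) w = vxor u (vxor v w)"
  unfolding vxor_def by (rule nth_equalityI) auto

lemma vxor_self: "vxor u u = replicate (length u) False"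
  unfolding vxor_def by (rule nth_equalityI) simp_all

lemma vxor_zero_right: "length u \<le> k \<Longrightarrow> vxor u (replicate k False) = u"
  unfolding vxor_def by (rule nth_equalityI) simp_all

lemma vxor_zero_left: "length u \<le> k \<Longrightarrow> vxor (replicate k False) u = u"
  by (simp add: vxor_commute vxor_zero_right)

lemma vxor_cancel_left: "length u = length v \<Longrightarrow> vxor u (vxor u v) = v"
  by (simp add: vxor_assoc[symmetric] vxor_self vxor_zero_left)

lemma vxor_eq_zero_iff: "length u = length v \<Longrightarrow> vxor u v = replicate (length u) False \<longleftrightarrow> u = v"
  by (metis vxor_cancel_left vxor_self)

lemma sum_vecs_reindex_vxor:
  assumes "w \<in> vecs l"
  shows "(\<Sum>v\<in>vecs l. h v) = (\<Sum>s\<in>vecs l. h (vxor w s))"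
  by (rule sum.reindex_bij_witness[of _ "vxor w" "vxor w"])
     (use assms in \<open>simp_all add: vxor_cancel_left vecs_length\<close>)

lemma dot_Nil [simp]: "dot [] y = False"
  by (simp add: dot_def)

lemma dot_Cons [simp]: "dot (a # u) (b # w) = ((a \<and> b) \<noteq> dot u w)"
proof -
  have "{i. i < length (a # u) \<and> (a # u) ! i \<and> (b # w) ! i}
      = (if a \<and> b then {0} else {}) \<union> Suc ` {i. i < length u \<and> u ! i \<and> w ! i}"
    by (auto simp: less_Suc_eq_0_disj)
  then show ?thesis
    by (auto simp: dot_def card_image)
qed

lemma dot_commute: "length u = length w \<Longrightarrow> dot u w = dot w u"
proof (induct u arbitrary: w)
  case (Cons a u)
  then obtain c w' where "w = c # w'" "length w' = length u" by (metis length_Suc_conv)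
  with Cons.hyps show ?case by (cases a; cases c) simp_all
qed simp

lemma dot_vxor_left:
  "length u = length v \<Longrightarrow> length v = length w \<Longrightarrow> dot (vxor u v) w = (dot u w \<noteq> dot v w)"
proof (induct u arbitrary: v w)
  case (Cons a u)
  then obtain b v' c w' where "v = b # v'" "w = c # w'" "length v' = length u" "length w' = length u"
    by (metis length_Suc_conv)
  with Cons.hyps show ?case by (cases a; cases b; cases c) simp_all
qed simp

lemma dot_vxor_right:
  assumes "length u = length v" "length v = length w"
  shows "dot u (vxor v w) = (dot u v \<noteq> dot u w)"
proof -
  have "dot u (vxor v w) = dot (vxor v w) u" using assms by (intro dot_commute) simp
  also have "\<dots> = (dot v u \<noteq> dot w u)" using assms by (intro dot_vxor_left) simp_all
  moreover have "dot v u = dot u v" "dot w u = dot u w" using assms by (simp_all add: dot_commute)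
  ultimately show ?thesis by simp
qed

lemma dot_zero_left [simp]: "dot (replicate k False) w = False"
proof -
  have "{i. i < length (replicate k False) \<and> replicate k False ! i \<and> w ! i} = {}" by auto
  then show ?thesis by (simp only: dot_def) simp
qed

lemma dot_zero_right [simp]: "length u \<le> k \<Longrightarrow> dot u (replicate k False) = False"
proof -
  assume "length u \<le> k"
  then have "{i. i < length u \<and> u ! i \<and> replicate k False ! i} = {}" by auto
  then show ?thesis by (simp only: dot_def) simp
qed

definition unitv :: "nat \<Rightarrow> nat \<Rightarrow> bool list" where
  "unitv l j = (replicate l False)[j := True]"

lemma unitv_vecs [simp]: "unitv l j \<in> vecs l"
  by (simp add: unitv_def vecs_def)

lemma dot_unitv: "length y = l \<Longrightarrow> j < l \<Longrightarrow> dot y (unitv l j) = y ! j"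
proof -
  assume "length y = l" "j < l"
  then have "{i. i < length y \<and> y ! i \<and> unitv l j ! i} = (if y ! j then {j} else {})"
    by (auto simp: unitv_def nth_list_update)
  then show ?thesis by (simp add: dot_def)
qed

lemma vecs_eqI:
  assumes "y \<in> vecs l" "y' \<in> vecs l" "\<And>x. x \<in> vecs l \<Longrightarrow> dot y x = dot y' x"
  shows "y = y'"
proof (rule nth_equalityI)
  show "length y = length y'" using assms by (simp add: vecs_length)
  fix i assume "i < length y"
  then show "y ! i = y' ! i"
    using assms(3)[of "unitv l i"] assms(1,2) by (simp add: dot_unitv vecs_length)
qed

lemma list_update_False_vxor_unitv:
  assumes "x \<in> vecs l" "n < l" "x ! n"
  shows "vxor (x[n := False]) (unitv l n) = x"
  using assms by (intro nth_equalityI) (auto simp: unitv_def vxor_def vecs_def nth_list_update)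

text \<open>Induction on the number of trailing coordinates of \<open>x\<close> known to vanish.\<close>
lemma additive_functional_eqI:
  assumes g: "\<And>x y. x \<in> vecs l \<Longrightarrow> y \<in> vecs l \<Longrightarrow> g (vxor x y) = (g x \<noteq> g y)"
    and h: "\<And>x y. x \<in> vecs l \<Longrightarrow> y \<in> vecs l \<Longrightarrow> h (vxor x y) = (h x \<noteq> h y)"
    and units: "\<And>j. j < l \<Longrightarrow> g (unitv l j) = h (unitv l j)"
    and x: "x \<in> vecs l"
  shows "g x = h x"
proof -
  have "g x = h x" if "n \<le> l" "x \<in> vecs l" "\<forall>i\<in>{n..<l}. \<not> x ! i" for n x
    using that
  proof (induct n arbitrary: x)
    case 0
    then have "x = vxor (replicate l False) (replicate l False)"
      by (intro nth_equalityI) (auto simp: vecs_def vxor_def)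
    then show ?case using g h by simp
  next
    case (Suc n)
    define x' where "x' = x[n := False]"
    have n: "n < l" "x \<in> vecs l" using Suc.prems by simp_all
    have x': "x' \<in> vecs l" using n by (simp add: x'_def vecs_def)
    have "\<not> x' ! i" if "i \<in> {n..<l}" for i
      using that Suc.prems(3) n by (cases "i = n") (auto simp: x'_def vecs_def)
    then have IH: "g x' = h x'" using Suc.hyps[OF _ x'] n by simp
    show ?case
    proof (cases "x ! n")
      case False
      then have "x' = x" unfolding x'_def by (metis list_update_id)
      then show ?thesis using IH by simp
    next
      case True
      then have x_eq: "x = vxor x' (unitv l n)"
        using n by (simp add: x'_def list_update_False_vxor_unitv)
      have "g x = (g x' \<noteq> g (unitv l n))" using g[OF x' unitv_vecs] x_eq by simp
      also have "\<dots> = (h x' \<noteq> h (unitv l n))" using IH units[OF n(1)] by simp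
      also have "\<dots> = h x" using h[OF x' unitv_vecs] x_eq by simp
      finally show ?thesis .
    qed
  qed
  from this[of l] x show ?thesis by (simp add: vecs_def)
qed

definition chi :: "bool list \<Rightarrow> bool list \<Rightarrow> complex" where
  "chi u w = (if dot u w then -1 else 1)"

lemma chi_Cons [simp]: "chi (a # u) (b # w) = (if a \<and> b then - chi u w else chi u w)"
  by (auto simp: chi_def)

lemma chi_zero_left [simp]: "chi (replicate k False) w = 1"
  by (simp add: chi_def)

lemma cnj_chi [simp]: "cnj (chi u w) = chi u w"
  by (simp add: chi_def)

lemma chi_commute: "length u = length w \<Longrightarrow> chi u w = chi w u"
  by (simp add: chi_def dot_commute)

lemma chi_vxor_left:
  "length u = length v \<Longrightarrow> length v = length w \<Longrightarrow> chi (vxor u v) w = chi u w * chi v w"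
  by (auto simp: chi_def dot_vxor_left)

lemma chi_vxor_right:
  "length u = length v \<Longrightarrow> length v = length w \<Longrightarrow> chi u (vxor v w) = chi u v * chi u w"
  by (auto simp: chi_def dot_vxor_right)

lemma sum_chi: "u \<in> vecs k \<Longrightarrow> (\<Sum>w\<in>vecs k. chi u w) = (if u = replicate k False then 2 ^ k else 0)"
proof (induct k arbitrary: u)
  case 0
  then show ?case by (simp add: vecs_def chi_def)
next
  case (Suc k)
  then obtain a u' where u: "u = a # u'" "u' \<in> vecs k"
    by (auto simp: vecs_def length_Suc_conv)
  show ?case
    using Suc(1)[OF u(2)] by (cases a)
      (auto simp: u sum_vecs_Suc sum.distrib sum_negf mult_2[symmetric] sum_distrib_left[symmetric])
qed

lemma sum_chi_mult_chi:
  assumes "x \<in> vecs l" "z \<in> vecs l"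
  shows "(\<Sum>w\<in>vecs l. chi x w * chi z w) = (if x = z then 2 ^ l else 0)"
proof -
  have "(\<Sum>w\<in>vecs l. chi x w * chi z w) = (\<Sum>w\<in>vecs l. chi (vxor x z) w)"
    using assms by (intro sum.cong) (simp_all add: chi_vxor_left vecs_length)
  also have "\<dots> = (if x = z then 2 ^ l else 0)"
    using assms sum_chi[of "vxor x z" l] vxor_eq_zero_iff[of x z] by (simp add: vecs_length)
  finally show ?thesis .
qed

lemma hadamard_plancherel:
  "(\<Sum>y\<in>vecs l. (\<Sum>w\<in>vecs l. f w * chi w y) * (\<Sum>v\<in>vecs l. g v * chi v y))
     = 2 ^ l * (\<Sum>w\<in>vecs l. f w * g w)"
proof -
  have "(\<Sum>y\<in>vecs l. (\<Sum>w\<in>vecs l. f w * chi w y) * (\<Sum>v\<in>vecs l. g v * chi v y))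
      = (\<Sum>y\<in>vecs l. \<Sum>w\<in>vecs l. \<Sum>v\<in>vecs l. f w * g v * (chi w y * chi v y))"
    by (simp add: sum_product mult_ac)
  also have "\<dots> = (\<Sum>w\<in>vecs l. \<Sum>v\<in>vecs l. \<Sum>y\<in>vecs l. f w * g v * (chi w y * chi v y))"
    by (subst sum.swap) (intro sum.cong refl sum.swap)
  also have "\<dots> = (\<Sum>w\<in>vecs l. \<Sum>v\<in>vecs l. f w * g v * (\<Sum>y\<in>vecs l. chi w y * chi v y))"
    by (simp add: sum_distrib_left)
  also have "\<dots> = (\<Sum>w\<in>vecs l. \<Sum>v\<in>vecs l. if w = v then f w * g v * 2 ^ l else 0)"
    by (intro sum.cong refl) (simp add: sum_chi_mult_chi)
  also have "\<dots> = 2 ^ l * (\<Sum>w\<in>vecs l. f w * g w)"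
    by (simp add: sum_distrib_left mult_ac)
  finally show ?thesis .
qed

definition annihilator :: "nat \<Rightarrow> bool list set \<Rightarrow> bool list set" where
  "annihilator l K = {u \<in> vecs l. \<forall>k\<in>K. \<not> dot k u}"

lemma sum_chi_subgroup:
  assumes K: "K \<subseteq> vecs l" "\<And>a b. a \<in> K \<Longrightarrow> b \<in> K \<Longrightarrow> vxor a b \<in> K" and u: "u \<in> vecs l"
  shows "(\<Sum>k\<in>K. chi k u) = (if u \<in> annihilator l K then of_nat (card K) else 0)"
proof (cases "u \<in> annihilator l K")
  case True
  then show ?thesis by (simp add: annihilator_def chi_def)
next
  case False
  then obtain k0 where k0: "k0 \<in> K" "dot k0 u" using u by (auto simp: annihilator_def)
  have len: "a \<in> K \<Longrightarrow> length a = l" for a using K(1) by (auto simp: vecs_def)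
  have "(\<Sum>k\<in>K. chi k u) = (\<Sum>k\<in>K. chi (vxor k0 k) u)"
    by (rule sum.reindex_bij_witness[of _ "vxor k0" "vxor k0"])
       (use K(2) k0(1) len in \<open>simp_all add: vxor_cancel_left\<close>)
  also have "\<dots> = (\<Sum>k\<in>K. - chi k u)"
  proof (intro sum.cong refl)
    fix k assume "k \<in> K"
    then show "chi (vxor k0 k) u = - chi k u"
      using k0 len[of k] len[OF k0(1)] u by (simp add: chi_vxor_left vecs_length chi_def[of k0])
  qed
  finally have "(\<Sum>k\<in>K. chi k u) = 0" by (simp add: sum_negf)
  then show ?thesis using False by simp
qed

lemma card_mult_card_annihilator:
  assumes K: "K \<subseteq> vecs l" "replicate l False \<in> K" "\<And>a b. a \<in> K \<Longrightarrow> b \<in> K \<Longrightarrow> vxor a b \<in> K"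
  shows "card K * card (annihilator l K) = 2 ^ l"
proof -
  have fin: "finite K" using finite_subset[OF K(1)] by simp
  have ann: "annihilator l K \<subseteq> vecs l" by (auto simp: annihilator_def)
  have "of_nat (card K * card (annihilator l K)) = (\<Sum>u\<in>annihilator l K. of_nat (card K) :: complex)"
    by simp
  also have "\<dots> = (\<Sum>u\<in>vecs l. if u \<in> annihilator l K then of_nat (card K) else 0)"
    using ann by (simp add: sum.If_cases inf.absorb2)
  also have "\<dots> = (\<Sum>u\<in>vecs l. \<Sum>k\<in>K. chi k u)"
    by (intro sum.cong refl) (simp add: sum_chi_subgroup[OF K(1,3)])
  also have "\<dots> = (\<Sum>k\<in>K. \<Sum>u\<in>vecs l. chi k u)"
    by (rule sum.swap)
  also have "\<dots> = (\<Sum>k\<in>K. if k = replicate l False then 2 ^ l else 0)"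
    using K(1) by (intro sum.cong refl) (simp add: sum_chi subsetD)
  also have "\<dots> = of_nat (2 ^ l)"
    using K(2) fin by simp
  finally show ?thesis by (simp only: of_nat_eq_iff)
qed

section \<open>Sums of vectors and the rank of a code\<close>

interpretation vxor: comp_fun_commute vxor
proof
  fix y x :: "bool list"
  show "vxor y \<circ> vxor x = vxor x \<circ> vxor y"
    by (rule ext) (simp add: vxor_assoc[symmetric] vxor_commute[of y x])
qed

definition xor_sum :: "nat \<Rightarrow> bool list set \<Rightarrow> bool list" where
  "xor_sum k T = Finite_Set.fold vxor (replicate k False) T"

lemma xor_sum_empty [simp]: "xor_sum k {} = replicate k False"
  by (simp add: xor_sum_def)

lemma xor_sum_insert: "finite T \<Longrightarrow> x \<notin> T \<Longrightarrow> xor_sum k (insert x T) = vxor x (xor_sum k T)"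
  by (simp add: xor_sum_def)

lemma f2_span_eq: "f2_span k S = {xor_sum k T | T. finite T \<and> T \<subseteq> S}"
  by (auto simp: f2_span_def xor_sum_def)

lemma xor_sum_nth:
  assumes "finite T" "T \<subseteq> vecs k"
  shows "xor_sum k T = map (\<lambda>i. odd (card {t\<in>T. t ! i})) [0..<k]"
  using assms
proof (induct T rule: finite_induct)
  case empty
  then show ?case by (simp add: list_eq_iff_nth_eq)
next
  case (insert x T)
  have "card {t\<in>insert x T. t ! i} = (if x ! i then Suc (card {t\<in>T. t ! i}) else card {t\<in>T. t ! i})" for i
  proof -
    have "{t\<in>insert x T. t ! i} = (if x ! i then insert x {t\<in>T. t ! i} else {t\<in>T. t ! i})" by auto
    then show ?thesis using insert(1,2) by simp
  qed
  then show ?case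
    using insert by (intro nth_equalityI) (auto simp: xor_sum_insert vxor_def vecs_def)
qed

lemma xor_sum_vecs: "finite T \<Longrightarrow> T \<subseteq> vecs k \<Longrightarrow> xor_sum k T \<in> vecs k"
  by (simp add: xor_sum_nth vecs_def)

lemma odd_card_sym_diff:
  assumes "finite X" "finite Y"
  shows "odd (card ((X - Y) \<union> (Y - X))) = (odd (card X) \<noteq> odd (card Y))"
proof -
  have "card ((X - Y) \<union> (Y - X)) = card (X - Y) + card (Y - X)"
    using assms by (intro card_Un_disjoint) auto
  moreover have "card (X - Y) + card (X \<inter> Y) = card X" "card (Y - X) + card (X \<inter> Y) = card Y"
    using assms by (metis Int_commute card_Diff_subset_Int card_mono
        inf_le1 le_add_diff_inverse2 finite_Int)+
  ultimately show ?thesis by presburger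
qed

lemma xor_sum_sym_diff:
  assumes "finite A" "finite B" "A \<subseteq> vecs k" "B \<subseteq> vecs k"
  shows "xor_sum k ((A - B) \<union> (B - A)) = vxor (xor_sum k A) (xor_sum k B)"
proof -
  have "odd (card {t \<in> (A - B) \<union> (B - A). t ! i}) = (odd (card {t\<in>A. t ! i}) \<noteq> odd (card {t\<in>B. t ! i}))" for i
  proof -
    have "{t \<in> (A - B) \<union> (B - A). t ! i} = ({t\<in>A. t ! i} - {t\<in>B. t ! i}) \<union> ({t\<in>B. t ! i} - {t\<in>A. t ! i})"
      by auto
    then show ?thesis using assms(1,2) by (simp add: odd_card_sym_diff)
  qed
  moreover have "finite ((A - B) \<union> (B - A))" "(A - B) \<union> (B - A) \<subseteq> vecs k"
    using assms by auto
  ultimately show ?thesis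
    using assms by (simp add: xor_sum_nth vxor_def list_eq_iff_nth_eq)
qed

text \<open>Two distinct subsets of \<open>S\<close> with the same sum have a nonempty symmetric difference summing
  to zero, and any element of it can be dropped from \<open>S\<close> without shrinking the span.\<close>
lemma inj_on_xor_sum_Pow:
  assumes S: "finite S" "S \<subseteq> vecs k"
    and irredundant: "\<And>d. d \<in> S \<Longrightarrow> f2_span k (S - {d}) \<noteq> f2_span k S"
  shows "inj_on (xor_sum k) (Pow S)"
proof (rule inj_onI, rule ccontr)
  fix T1 T2 assume T: "T1 \<in> Pow S" "T2 \<in> Pow S" "xor_sum k T1 = xor_sum k T2" "T1 \<noteq> T2"
  define D where "D = (T1 - T2) \<union> (T2 - T1)"
  have fin: "finite T1" "finite T2" "T1 \<subseteq> vecs k" "T2 \<subseteq> vecs k"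
    using T(1,2) S by (auto intro: finite_subset)
  obtain d where d: "d \<in> D" using T(4) unfolding D_def by blast
  have D: "D \<subseteq> S" "finite D" "D \<subseteq> vecs k" using T fin unfolding D_def by auto
  have D_zero: "xor_sum k D = replicate k False"
    unfolding D_def xor_sum_sym_diff[OF fin] T(3) using xor_sum_vecs[OF fin(2,4)]
    by (simp add: vxor_self vecs_length)
  have "f2_span k S \<subseteq> f2_span k (S - {d})"
  proof
    fix v assume "v \<in> f2_span k S"
    then obtain T where T: "finite T" "T \<subseteq> S" "v = xor_sum k T" by (auto simp: f2_span_eq)
    define T' where "T' = (if d \<in> T then (T - D) \<union> (D - T) else T)"
    have "xor_sum k T' = vxor (xor_sum k T) (xor_sum k D)" if "d \<in> T"
      using that T D S by (auto simp: T'_def intro!: xor_sum_sym_diff)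
    moreover have "length (xor_sum k T) = k"
      using T S xor_sum_vecs[of T k] by (auto simp: vecs_length)
    ultimately have "v = xor_sum k T'"
      using T D_zero by (auto simp: T'_def vxor_zero_right)
    moreover have "finite T'" "T' \<subseteq> S - {d}" using T D d by (auto simp: T'_def)
    ultimately show "v \<in> f2_span k (S - {d})" by (auto simp: f2_span_eq)
  qed
  moreover have "f2_span k (S - {d}) \<subseteq> f2_span k S" by (auto simp: f2_span_eq)
  ultimately show False using irredundant[of d] d D(1) by blast
qed

lemma card_subspace:
  assumes C: "finite C" "C \<subseteq> vecs k" "replicate k False \<in> C"
    "\<And>a b. a \<in> C \<Longrightarrow> b \<in> C \<Longrightarrow> vxor a b \<in> C"
  shows "card C = 2 ^ Min {card S | S. finite S \<and> S \<subseteq> C \<and> f2_span k S = C}"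
proof -
  define N where "N = {card S | S. finite S \<and> S \<subseteq> C \<and> f2_span k S = C}"
  have span_subset: "f2_span k S \<subseteq> C" if "S \<subseteq> C" for S
  proof -
    have "finite T \<Longrightarrow> T \<subseteq> C \<Longrightarrow> xor_sum k T \<in> C" for T
      by (induct T rule: finite_induct) (simp_all add: C xor_sum_insert)
    then show ?thesis using that by (auto simp: f2_span_eq)
  qed
  have "f2_span k C = C"
  proof (rule antisym[OF span_subset], simp, rule subsetI)
    fix c assume "c \<in> C"
    then have "c = xor_sum k {c}" using C(2) by (auto simp: xor_sum_insert vxor_zero_right vecs_length)
    then show "c \<in> f2_span k C" using \<open>c \<in> C\<close> by (auto simp: f2_span_eq)
  qed
  then have "card C \<in> N" using C(1) by (auto simp: N_def)
  moreover have "finite N"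
  proof -
    have "N \<subseteq> card ` Pow C" by (auto simp: N_def)
    then show ?thesis using C(1) finite_subset by blast
  qed
  ultimately have "Min N \<in> N" by (intro Min_in) auto
  then obtain S where S: "finite S" "S \<subseteq> C" "f2_span k S = C" "card S = Min N"
    by (auto simp: N_def)
  have "inj_on (xor_sum k) (Pow S)"
  proof (rule inj_on_xor_sum_Pow)
    fix d assume "d \<in> S"
    then have "card (S - {d}) < card S" by (rule card_Diff1_less[OF S(1)])
    moreover have "card S \<le> card (S - {d})" if "f2_span k (S - {d}) = C"
      using that S \<open>finite N\<close> by (auto simp: N_def intro!: Min_le)
    ultimately show "f2_span k (S - {d}) \<noteq> f2_span k S" using S(3) by (metis not_le)
  qed (use S C(2) in blast)+
  moreover have "C = xor_sum k ` Pow S"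
    unfolding S(3)[symmetric] f2_span_eq using S(1) by (blast intro: finite_subset)
  ultimately have "card C = card (Pow S)" by (simp add: card_image)
  then show ?thesis using S by (simp add: card_Pow N_def)
qed

section \<open>Linear maps and projectors\<close>

locale f2_linear_map =
  fixes l k :: nat and f :: "bool list \<Rightarrow> bool list"
  assumes map_vecs: "x \<in> vecs l \<Longrightarrow> f x \<in> vecs k"
    and map_vxor: "x \<in> vecs l \<Longrightarrow> y \<in> vecs l \<Longrightarrow> f (vxor x y) = vxor (f x) (f y)"
begin

definition kernel :: "bool list set" where
  "kernel = {y \<in> vecs l. f y = replicate k False}"

lemma map_zero: "f (replicate l False) = replicate k False"
proof -
  have "f (replicate l False) = f (vxor (replicate l False) (replicate l False))"
    by (simp add: vxor_self)
  also have "\<dots> = vxor (f (replicate l False)) (f (replicate l False))"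
    by (simp add: map_vxor)
  also have "\<dots> = replicate k False"
    using map_vecs[OF zero_vecs] by (simp add: vxor_self vecs_length)
  finally show ?thesis .
qed

lemma kernel_subset: "kernel \<subseteq> vecs l"
  by (auto simp: kernel_def)

lemma zero_in_kernel: "replicate l False \<in> kernel"
  by (simp add: kernel_def map_zero)

lemma vxor_in_kernel: "a \<in> kernel \<Longrightarrow> b \<in> kernel \<Longrightarrow> vxor a b \<in> kernel"
  by (auto simp: kernel_def map_vxor vxor_self)

lemma fibre_eq:
  assumes y0: "y0 \<in> vecs l"
  shows "{y \<in> vecs l. f y = f y0} = vxor y0 ` kernel"
proof (intro equalityI subsetI)
  fix y assume "y \<in> {y \<in> vecs l. f y = f y0}"
  then have y: "y \<in> vecs l" "f y = f y0" by auto
  have "vxor y0 y \<in> kernel"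
    using y y0 map_vecs[OF y0] by (simp add: kernel_def map_vxor vxor_self vecs_length)
  moreover have "y = vxor y0 (vxor y0 y)" using y y0 by (simp add: vxor_cancel_left vecs_length)
  ultimately show "y \<in> vxor y0 ` kernel" by blast
next
  fix y assume "y \<in> vxor y0 ` kernel"
  then obtain z where z: "z \<in> vecs l" "f z = replicate k False" "y = vxor y0 z"
    by (auto simp: kernel_def)
  then show "y \<in> {y \<in> vecs l. f y = f y0}"
    using y0 map_vecs[OF y0] by (simp add: map_vxor vxor_zero_right vecs_length)
qed

lemma card_fibre:
  assumes y0: "y0 \<in> vecs l"
  shows "card {y \<in> vecs l. f y = f y0} = card kernel"
proof -
  have "inj_on (vxor y0) kernel"
    by (rule inj_on_inverseI[of _ "vxor y0"])
       (use y0 kernel_subset in \<open>auto simp: vxor_cancel_left vecs_length\<close>)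
  then show ?thesis by (simp add: fibre_eq[OF y0] card_image)
qed

lemma sum_comp_map:
  "(\<Sum>y\<in>vecs l. g (f y)) = of_nat (card kernel) * (\<Sum>c\<in>f ` vecs l. g c :: 'a :: comm_semiring_1)"
proof -
  have "(\<Sum>y\<in>vecs l. g (f y)) = (\<Sum>c\<in>f ` vecs l. \<Sum>y\<in>{y \<in> vecs l. f y = c}. g (f y))"
    by (rule sum.image_gen) simp
  also have "\<dots> = (\<Sum>c\<in>f ` vecs l. of_nat (card kernel) * g c)"
  proof (rule sum.cong[OF refl])
    fix c assume "c \<in> f ` vecs l"
    then obtain y0 where y0: "y0 \<in> vecs l" "c = f y0" by blast
    have "(\<Sum>y\<in>{y \<in> vecs l. f y = c}. g (f y)) = (\<Sum>y\<in>{y \<in> vecs l. f y = c}. g c)"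
      by (rule sum.cong) auto
    then show "(\<Sum>y\<in>{y \<in> vecs l. f y = c}. g (f y)) = of_nat (card kernel) * g c"
      using card_fibre[OF y0(1)] y0(2) by simp
  qed
  finally show ?thesis by (simp add: sum_distrib_left)
qed

lemma card_kernel_mult_card_image: "card kernel * card (f ` vecs l) = 2 ^ l"
  using sum_comp_map[of "\<lambda>_. 1 :: nat"] by (simp add: card_vecs)

lemma image_subspace:
  "f ` vecs l \<subseteq> vecs k" "replicate k False \<in> f ` vecs l"
  "a \<in> f ` vecs l \<Longrightarrow> b \<in> f ` vecs l \<Longrightarrow> vxor a b \<in> f ` vecs l"
  using map_vecs map_zero[symmetric] by (auto simp: map_vxor[symmetric])

lemma dual_map:
  assumes z: "z \<in> vecs k"
  shows "dual_map l f z \<in> vecs l" and "x \<in> vecs l \<Longrightarrow> dot (dual_map l f z) x = dot z (f x)"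
proof -
  define y where "y = map (\<lambda>j. dot z (f (unitv l j))) [0..<l]"
  have y: "y \<in> vecs l" by (simp add: y_def vecs_def)
  have dot_y: "dot y x = dot z (f x)" if "x \<in> vecs l" for x
  proof (rule additive_functional_eqI[OF _ _ _ that])
    fix x x' assume x: "x \<in> vecs l" "x' \<in> vecs l"
    then show "dot y (vxor x x') = (dot y x \<noteq> dot y x')"
      using y by (intro dot_vxor_right) (simp_all add: vecs_length)
    have "f x \<in> vecs k" "f x' \<in> vecs k" using x by (simp_all add: map_vecs)
    then show "dot z (f (vxor x x')) = (dot z (f x) \<noteq> dot z (f x'))"
      using x z by (simp add: map_vxor dot_vxor_right vecs_length)
  next
    fix j assume "j < l"
    then show "dot y (unitv l j) = dot z (f (unitv l j))" by (simp add: y_def dot_unitv)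
  qed
  have "dual_map l f z = y"
    unfolding dual_map_def
    by (rule the_equality) (use y dot_y in \<open>auto intro: vecs_eqI[of _ l]\<close>)
  then show "dual_map l f z \<in> vecs l" "x \<in> vecs l \<Longrightarrow> dot (dual_map l f z) x = dot z (f x)"
    using y dot_y by simp_all
qed

end

locale projector = f2_linear_map l l m for l and m :: "bool list \<Rightarrow> bool list" +
  assumes idem: "x \<in> vecs l \<Longrightarrow> m (m x) = m x"

lemma projectorI: "is_projector l m \<Longrightarrow> projector l m"
  by (simp add: is_projector_def is_linear_map_def projector_def projector_axioms_def
      f2_linear_map_def)

context projector
begin

text \<open>Since \<open>m\<close> is idempotent, \<open>x = m x + (x + m x)\<close> splits \<open>vecs l\<close> into range and kernel,
  so \<open>m\<^sup>*\<close> fixes exactly the vectors orthogonal to the kernel.\<close>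
lemma range_dual_map: "dual_map l m ` vecs l = annihilator l kernel"
proof safe
  fix z assume z: "z \<in> vecs l"
  show "dual_map l m z \<in> annihilator l kernel"
    unfolding annihilator_def
  proof safe
    show "dual_map l m z \<in> vecs l" using dual_map(1)[OF z] .
    fix k assume k: "k \<in> kernel" "dot k (dual_map l m z)"
    have "dot k (dual_map l m z) = dot (dual_map l m z) k"
      using k(1) kernel_subset dual_map(1)[OF z] by (intro dot_commute) (auto simp: vecs_length)
    also have "\<dots> = dot z (m k)" using k(1) kernel_subset by (intro dual_map(2)[OF z]) auto
    also have "\<dots> = False" using k(1) z by (simp add: kernel_def vecs_length)
    finally show False using k(2) by simp
  qed
next
  fix u assume u: "u \<in> annihilator l kernel"
  then have uv: "u \<in> vecs l" by (simp add: annihilator_def)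
  have "dot u x = dot u (m x)" if x: "x \<in> vecs l" for x
  proof -
    define k where "k = vxor x (m x)"
    have mx: "m x \<in> vecs l" using x by (rule map_vecs)
    have kK: "k \<in> kernel"
      using x mx by (simp add: k_def kernel_def map_vxor idem vxor_self vecs_length)
    have kv: "k \<in> vecs l" using kK kernel_subset by blast
    have "x = vxor (m x) k"
      using x mx by (simp add: k_def vxor_commute[of x] vxor_cancel_left vecs_length)
    then have "dot u x = dot u (vxor (m x) k)" by (rule arg_cong)
    also have "\<dots> = (dot u (m x) \<noteq> dot u k)"
      using uv mx kv by (intro dot_vxor_right) (simp_all add: vecs_length)
    finally have "dot u x = (dot u (m x) \<noteq> dot u k)" .
    moreover have "\<not> dot u k"
      using u kK uv kernel_subset by (auto simp: annihilator_def dot_commute vecs_length subset_iff)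
    ultimately show ?thesis by simp
  qed
  then have "dual_map l m u = u"
    using uv dual_map[OF uv] by (intro vecs_eqI[of _ l]) auto
  then show "u \<in> dual_map l m ` vecs l" using uv by (metis image_eqI)
qed

lemma sum_fibre_chi:
  assumes x: "x \<in> m ` vecs l" and u: "u \<in> vecs l"
  shows "(\<Sum>y\<in>{y \<in> vecs l. m y = x}. chi y u)
    = chi x u * (if u \<in> annihilator l kernel then of_nat (card kernel) else 0)"
proof -
  have xv: "x \<in> vecs l" and mx: "m x = x" using x map_vecs idem by auto
  have "inj_on (vxor x) kernel"
    by (rule inj_on_inverseI[of _ "vxor x"])
       (use xv kernel_subset in \<open>auto simp: vxor_cancel_left vecs_length\<close>)
  then have "(\<Sum>y\<in>{y \<in> vecs l. m y = x}. chi y u) = (\<Sum>k\<in>kernel. chi (vxor x k) u)"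
    using fibre_eq[OF xv] mx by (simp add: sum.reindex)
  also have "\<dots> = chi x u * (\<Sum>k\<in>kernel. chi k u)"
  proof -
    have "chi (vxor x k) u = chi x u * chi k u" if "k \<in> kernel" for k
      using that kernel_subset xv u by (intro chi_vxor_left) (auto simp: vecs_length)
    then show ?thesis by (simp add: sum_distrib_left)
  qed
  also have "(\<Sum>k\<in>kernel. chi k u) = (if u \<in> annihilator l kernel then of_nat (card kernel) else 0)"
    using kernel_subset vxor_in_kernel u by (rule sum_chi_subgroup)
  finally show ?thesis .
qed

lemma card_kernel_mult_card_range_dual_map: "card kernel * card (dual_map l m ` vecs l) = 2 ^ l"
  unfolding range_dual_map
  using kernel_subset zero_in_kernel vxor_in_kernel by (rule card_mult_card_annihilator)

end

section \<open>Hamiltonian eigenvalues and the weight enumerator\<close>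

text \<open>\<open>H_M\<close> is diagonal in the Hadamard basis, with eigenvalue \<open>ham_eigenvalue M w\<close> on the
  Hadamard transform of \<open>|w\<rangle>\<close>.\<close>
definition ham_eigenvalue :: "bool list list \<Rightarrow> bool list \<Rightarrow> complex" where
  "ham_eigenvalue M w = (\<Sum>a\<leftarrow>M. chi a w)"

definition mat_vec :: "bool list list \<Rightarrow> bool list \<Rightarrow> bool list" where
  "mat_vec M y = map (\<lambda>r. dot r y) M"

lemma hweight_Nil [simp]: "hweight [] = 0"
  by (simp add: hweight_def)

lemma hweight_Cons [simp]: "hweight (b # xs) = (if b then 1 else 0) + hweight xs"
  by (simp add: hweight_def)

lemma cnj_ham_eigenvalue [simp]: "cnj (ham_eigenvalue M w) = ham_eigenvalue M w"
  by (induct M) (simp_all add: ham_eigenvalue_def)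

lemma ham_eigenvalue_hweight:
  "ham_eigenvalue M w = of_nat (length M) - 2 * of_nat (hweight (mat_vec M w))"
  by (induct M) (auto simp: ham_eigenvalue_def mat_vec_def chi_def)

lemma ham_eigenvalue_diff_vxor:
  assumes rows: "\<forall>r\<in>set P. length r = l" and w: "w \<in> vecs l" and s: "s \<in> vecs l"
  shows "ham_eigenvalue P w - ham_eigenvalue P (vxor w s) = 2 * ham_eigenvalue (restrict_rows P s) w"
  using rows
proof (induct P)
  case (Cons a P)
  have "chi a (vxor w s) = chi a w * chi a s"
    using Cons.prems w s by (intro chi_vxor_right) (simp_all add: vecs_length)
  then show ?case
    using Cons by (auto simp: ham_eigenvalue_def restrict_rows_def chi_def[of a s] algebra_simps)
qed (simp add: ham_eigenvalue_def restrict_rows_def)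

lemma f2_linear_map_mat_vec:
  assumes rows: "\<forall>r\<in>set M. length r = l"
  shows "f2_linear_map l (length M) (mat_vec M)"
proof
  fix x y assume "x \<in> vecs l" "y \<in> vecs l"
  then show "mat_vec M (vxor x y) = vxor (mat_vec M x) (mat_vec M y)"
    using rows by (induct M) (simp_all add: mat_vec_def dot_vxor_right vecs_length)
qed (simp add: mat_vec_def vecs_def)

lemma card_colspace:
  assumes rows: "\<forall>r\<in>set M. length r = l"
  shows "card (colspace l M) = 2 ^ f2_rank l M"
proof -
  interpret f2_linear_map l "length M" "mat_vec M"
    using rows by (rule f2_linear_map_mat_vec)
  have "colspace l M = mat_vec M ` vecs l" by (simp add: colspace_def mat_vec_def)
  then show ?thesis
    unfolding f2_rank_def using image_subspace by (intro card_subspace) simp_all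
qed

text \<open>\<open>alpha l M \<phi>\<close> is the normalised trace of \<open>exp (\<i> \<phi> H_M)\<close>.\<close>
lemma alpha_eq_average:
  assumes rows: "\<forall>r\<in>set M. length r = l"
  shows "alpha l M \<phi> = (\<Sum>w\<in>vecs l. exp (\<i> * of_real \<phi> * ham_eigenvalue M w)) / 2 ^ l"
proof -
  interpret f2_linear_map l "length M" "mat_vec M"
    using rows by (rule f2_linear_map_mat_vec)
  define \<zeta> where "\<zeta> = exp (- 2 * \<i> * complex_of_real \<phi>)"
  define e where "e = exp (\<i> * complex_of_real (\<phi> * real (length M)))"
  have C: "colspace l M = mat_vec M ` vecs l" by (simp add: colspace_def mat_vec_def)
  have "exp (\<i> * of_real \<phi> * ham_eigenvalue M w) = e * \<zeta> ^ hweight (mat_vec M w)" for w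
  proof -
    have eq: "\<i> * of_real \<phi> * ham_eigenvalue M w
        = \<i> * complex_of_real (\<phi> * real (length M)) + of_nat (hweight (mat_vec M w)) * (- 2 * \<i> * of_real \<phi>)"
      by (simp add: ham_eigenvalue_hweight algebra_simps)
    show ?thesis unfolding eq exp_add exp_of_nat_mult e_def \<zeta>_def ..
  qed
  then have "(\<Sum>w\<in>vecs l. exp (\<i> * of_real \<phi> * ham_eigenvalue M w))
      = of_nat (card kernel) * (e * weight_enum (colspace l M) \<zeta>)"
    by (simp add: sum_comp_map[of "\<lambda>c. e * \<zeta> ^ hweight c"] C weight_enum_def sum_distrib_left)
  moreover have "of_nat (card kernel) = (2 ^ l / 2 ^ f2_rank l M :: complex)"
  proof -
    have "card kernel * 2 ^ f2_rank l M = 2 ^ l"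
      using card_kernel_mult_card_image card_colspace[OF rows] by (simp add: C)
    then have "of_nat (card kernel) * 2 ^ f2_rank l M = (2 ^ l :: complex)"
      by (metis of_nat_mult of_nat_numeral of_nat_power)
    then show ?thesis by (simp add: field_simps)
  qed
  moreover have "alpha l M \<phi> = e * weight_enum (colspace l M) \<zeta> / 2 ^ f2_rank l M"
    by (simp add: alpha_def e_def \<zeta>_def powr_minus powr_realpow divide_inverse)
  ultimately show ?thesis by simp
qed

section \<open>Output distribution of an X-program\<close>

definition flip_bits :: "nat set \<Rightarrow> bool list \<Rightarrow> bool list" where
  "flip_bits F y = map (\<lambda>i. y ! i \<noteq> (i \<in> F)) [0..<length y]"

lemma flip_bits_vecs [simp]: "y \<in> vecs l \<Longrightarrow> flip_bits F y \<in> vecs l"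
  by (simp add: flip_bits_def vecs_def)

lemma flip_bits_empty [simp]: "flip_bits {} y = y"
  by (rule nth_equalityI) (simp_all add: flip_bits_def)

lemma flip_bits_insert:
  "b < length y \<Longrightarrow> b \<notin> F \<Longrightarrow> flip_bits (insert b F) y = (flip_bits F y)[b := \<not> flip_bits F y ! b]"
  by (rule nth_equalityI) (auto simp: flip_bits_def nth_list_update)

lemma foldr_pauli_eq_flip_bits:
  assumes "distinct bs" "set bs \<subseteq> {..<l}" "x \<in> vecs l" "y \<in> vecs l"
  shows "foldr (\<lambda>b A. mat_mult l (if p ! b then pauliX b else ident) A) bs ident x y
     = (if x = flip_bits {b \<in> set bs. p ! b} y then 1 else 0)"
  using assms
proof (induct bs arbitrary: x)
  case Nil
  then show ?case by (simp add: ident_def)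
next
  case (Cons b bs)
  define w where "w = flip_bits {b \<in> set bs. p ! b} y"
  have w: "w \<in> vecs l" using Cons.prems(4) by (simp add: w_def)
  have "foldr (\<lambda>b A. mat_mult l (if p ! b then pauliX b else ident) A) (b # bs) ident x y
     = (\<Sum>z\<in>vecs l. (if p ! b then pauliX b else ident) x z *
          foldr (\<lambda>b A. mat_mult l (if p ! b then pauliX b else ident) A) bs ident z y)"
    by (simp add: mat_mult_def)
  also have "\<dots> = (\<Sum>z\<in>vecs l. (if p ! b then pauliX b else ident) x z * (if z = w then 1 else 0))"
    using Cons by (intro sum.cong) (simp_all add: w_def)
  also have "\<dots> = (if p ! b then pauliX b else ident) x w"
    using w by (simp add: if_distrib cong: if_cong)
  also have "\<dots> = (if x = flip_bits {c \<in> set (b # bs). p ! c} y then 1 else 0)"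
  proof (cases "p ! b")
    case True
    have "{c \<in> set (b # bs). p ! c} = insert b {c \<in> set bs. p ! c}" using True by auto
    moreover have "b < length y" "b \<notin> {c \<in> set bs. p ! c}" using Cons.prems by (auto simp: vecs_length)
    ultimately show ?thesis using True by (simp add: flip_bits_insert w_def pauliX_def)
  next
    case False
    then have "{c \<in> set (b # bs). p ! c} = {c \<in> set bs. p ! c}" by auto
    then show ?thesis using False by (simp add: ident_def w_def)
  qed
  finally show ?case .
qed

lemma pauli_string_eq:
  assumes "x \<in> vecs l" "y \<in> vecs l" "length p = l"
  shows "pauli_string l p x y = (if x = vxor y p then 1 else 0)"
proof -
  have "flip_bits {b \<in> set [0..<l]. p ! b} y = vxor y p"
    using assms by (intro nth_equalityI) (auto simp: flip_bits_def vxor_def vecs_def)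
  then show ?thesis
    unfolding pauli_string_def using assms by (subst foldr_pauli_eq_flip_bits) auto
qed

lemma indicator_vxor_hadamard:
  assumes x: "x \<in> vecs l" and y: "y \<in> vecs l" and p: "p \<in> vecs l"
  shows "(if x = vxor y p then 1 else 0) = (\<Sum>w\<in>vecs l. chi x w * chi y w * chi p w) / 2 ^ l"
proof -
  have "chi y w * chi p w = chi (vxor y p) w" if "w \<in> vecs l" for w
    using that y p by (simp add: chi_vxor_left vecs_length)
  then have "(\<Sum>w\<in>vecs l. chi x w * chi y w * chi p w) = (\<Sum>w\<in>vecs l. chi x w * chi (vxor y p) w)"
    by (simp add: mult.assoc)
  also have "\<dots> = (if x = vxor y p then 2 ^ l else 0)"
    using x y p by (simp add: sum_chi_mult_chi)
  finally show ?thesis by simp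
qed

lemma hamiltonian_hadamard:
  assumes rows: "\<forall>r\<in>set P. length r = l" and x: "x \<in> vecs l" and y: "y \<in> vecs l"
  shows "hamiltonian l P x y = (\<Sum>w\<in>vecs l. chi x w * chi y w * ham_eigenvalue P w) / 2 ^ l"
proof -
  have "hamiltonian l P x y = (\<Sum>a<length P. (\<Sum>w\<in>vecs l. chi x w * chi y w * chi (P ! a) w) / 2 ^ l)"
    unfolding hamiltonian_def
    using rows x y by (intro sum.cong refl) (simp add: pauli_string_eq indicator_vxor_hadamard vecs_def)
  also have "\<dots> = (\<Sum>w\<in>vecs l. chi x w * chi y w * ham_eigenvalue P w) / 2 ^ l"
    by (simp add: sum_divide_distrib[symmetric] ham_eigenvalue_def sum_list_sum_nth atLeast0LessThan
        sum_distrib_left sum.swap[of _ "{..<length P}"])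
  finally show ?thesis .
qed

text \<open>The hypothesis on \<open>A\<close> says that \<open>A\<close> is diagonal in the Hadamard basis, with eigenvalues \<open>a\<close>.\<close>
lemma mat_pow_hadamard_diag:
  assumes A: "\<And>x y. x \<in> vecs l \<Longrightarrow> y \<in> vecs l \<Longrightarrow> A x y = (\<Sum>w\<in>vecs l. chi x w * chi y w * a w) / 2 ^ l"
    and x: "x \<in> vecs l" and z: "z \<in> vecs l"
  shows "mat_pow l A n x z = (\<Sum>w\<in>vecs l. chi x w * chi z w * a w ^ n) / 2 ^ l"
  using x
proof (induct n arbitrary: x)
  case 0
  then show ?case using z by (simp add: ident_def sum_chi_mult_chi)
next
  case (Suc n)
  have "mat_pow l A (Suc n) x z = (\<Sum>y\<in>vecs l. A x y * mat_pow l A n y z)"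
    by (simp add: mat_mult_def)
  also have "\<dots> = (\<Sum>y\<in>vecs l. (\<Sum>w\<in>vecs l. (chi x w * a w / 2 ^ l) * chi w y)
                     * (\<Sum>v\<in>vecs l. (chi z v * a v ^ n / 2 ^ l) * chi v y))"
  proof (rule sum.cong[OF refl])
    fix y assume y: "y \<in> vecs l"
    have "chi y w = chi w y" if "w \<in> vecs l" for w using that y by (simp add: chi_commute vecs_length)
    then show "A x y * mat_pow l A n y z
        = (\<Sum>w\<in>vecs l. chi x w * a w / 2 ^ l * chi w y) * (\<Sum>v\<in>vecs l. chi z v * a v ^ n / 2 ^ l * chi v y)"
      using A[OF Suc.prems y] Suc.hyps[OF y]
      by (simp add: sum_divide_distrib mult_ac cong: sum.cong)
  qed
  also have "\<dots> = 2 ^ l * (\<Sum>w\<in>vecs l. (chi x w * a w / 2 ^ l) * (chi z w * a w ^ n / 2 ^ l))"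
    by (rule hadamard_plancherel)
  also have "\<dots> = (\<Sum>w\<in>vecs l. chi x w * chi z w * a w ^ Suc n) / 2 ^ l"
    by (simp add: sum_distrib_left sum_divide_distrib mult_ac power2_eq_square)
  finally show ?case .
qed

lemma mat_exp_hadamard_diag:
  assumes A: "\<And>x y. x \<in> vecs l \<Longrightarrow> y \<in> vecs l \<Longrightarrow> A x y = (\<Sum>w\<in>vecs l. chi x w * chi y w * a w) / 2 ^ l"
    and x: "x \<in> vecs l" and z: "z \<in> vecs l"
  shows "mat_exp l A x z = (\<Sum>w\<in>vecs l. chi x w * chi z w * exp (a w)) / 2 ^ l"
proof -
  have "(\<lambda>n. (a w) ^ n / of_nat (fact n)) sums exp (a w)" for w
    using exp_converges[of "a w"] by (simp add: scaleR_conv_of_real divide_inverse mult.commute)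
  then have "(\<lambda>n. \<Sum>w\<in>vecs l. (chi x w * chi z w / 2 ^ l) * ((a w) ^ n / of_nat (fact n)))
      sums (\<Sum>w\<in>vecs l. (chi x w * chi z w / 2 ^ l) * exp (a w))"
    by (intro sums_sum sums_mult)
  moreover have "mat_pow l A n x z / of_nat (fact n)
      = (\<Sum>w\<in>vecs l. (chi x w * chi z w / 2 ^ l) * ((a w) ^ n / of_nat (fact n)))" for n
    by (simp add: mat_pow_hadamard_diag[OF A x z] sum_divide_distrib sum_distrib_left mult_ac)
  ultimately show ?thesis
    unfolding mat_exp_def by (simp add: sums_unique[symmetric] sum_divide_distrib mult_ac)
qed

lemma xprog_amplitude:
  assumes rows: "\<forall>r\<in>set P. length r = l" and y: "y \<in> vecs l"
  shows "mat_exp l (\<lambda>u v. \<i> * of_real \<theta> * hamiltonian l P u v) y (replicate l False)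
    = (\<Sum>w\<in>vecs l. chi y w * exp (\<i> * of_real \<theta> * ham_eigenvalue P w)) / 2 ^ l"
  using y by (subst mat_exp_hadamard_diag[where a = "\<lambda>w. \<i> * of_real \<theta> * ham_eigenvalue P w"])
    (simp_all add: hamiltonian_hadamard[OF rows] sum_divide_distrib sum_distrib_left mult_ac)

lemma cnj_exp: "cnj (exp z) = exp (cnj z)"
  by (simp add: cis_cnj exp_eq_polar)

lemma sum_chi_mult_chi_shift:
  assumes y: "y \<in> vecs l"
  shows "(\<Sum>w\<in>vecs l. \<Sum>v\<in>vecs l. chi y w * chi y v * g w v)
    = (\<Sum>w\<in>vecs l. \<Sum>s\<in>vecs l. chi y s * g w (vxor w s))"
proof (rule sum.cong[OF refl])
  fix w assume w: "w \<in> vecs l"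
  have "chi y w * chi y (vxor w s) = chi y s" if "s \<in> vecs l" for s
  proof -
    have "chi y (vxor w s) = chi y w * chi y s"
      using that w y by (intro chi_vxor_right) (simp_all add: vecs_length)
    then show ?thesis by (simp add: chi_def)
  qed
  then show "(\<Sum>v\<in>vecs l. chi y w * chi y v * g w v) = (\<Sum>s\<in>vecs l. chi y s * g w (vxor w s))"
    by (subst sum_vecs_reindex_vxor[OF w]) (intro sum.cong refl, simp)
qed

text \<open>The output distribution as a Fourier series: the coefficient at \<open>s\<close> is the phase sum of
  \<open>P\<^sub>s\<close>, because \<open>ham_eigenvalue P w - ham_eigenvalue P (w + s)\<close> only sees the rows with
  \<open>a \<cdot> s = 1\<close>.\<close>
lemma xprog_prob_fourier:
  assumes rows: "\<forall>r\<in>set P. length r = l" and y: "y \<in> vecs l"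
  shows "complex_of_real (xprog_prob l P \<theta> y) =
    (\<Sum>s\<in>vecs l. chi y s * (\<Sum>w\<in>vecs l. exp (\<i> * of_real (2 * \<theta>) * ham_eigenvalue (restrict_rows P s) w)))
      / (2 ^ l * 2 ^ l)"
proof -
  define a where "a w = \<i> * of_real \<theta> * ham_eigenvalue P w" for w
  define \<psi> where "\<psi> = (\<Sum>w\<in>vecs l. chi y w * exp (a w)) / 2 ^ l"
  have "complex_of_real (xprog_prob l P \<theta> y) = \<psi> * cnj \<psi>"
    unfolding xprog_prob_def xprog_amplitude[OF rows y] a_def \<psi>_def by (rule complex_norm_square)
  also have "cnj \<psi> = (\<Sum>v\<in>vecs l. chi y v * exp (- a v)) / 2 ^ l"
    by (simp add: \<psi>_def cnj_exp a_def)
  also have "\<psi> * \<dots> = (\<Sum>w\<in>vecs l. \<Sum>v\<in>vecs l. (chi y w * exp (a w)) * (chi y v * exp (- a v)))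
      / (2 ^ l * 2 ^ l)"
    unfolding \<psi>_def times_divide_times_eq sum_product ..
  also have "\<dots> = (\<Sum>w\<in>vecs l. \<Sum>v\<in>vecs l. chi y w * chi y v * exp (a w - a v)) / (2 ^ l * 2 ^ l)"
    by (simp add: exp_diff exp_minus divide_inverse mult_ac)
  also have "\<dots> = (\<Sum>w\<in>vecs l. \<Sum>s\<in>vecs l. chi y s * exp (a w - a (vxor w s))) / (2 ^ l * 2 ^ l)"
    by (simp only: sum_chi_mult_chi_shift[OF y])
  also have "\<dots> = (\<Sum>w\<in>vecs l. \<Sum>s\<in>vecs l.
      chi y s * exp (\<i> * of_real (2 * \<theta>) * ham_eigenvalue (restrict_rows P s) w)) / (2 ^ l * 2 ^ l)"
  proof -
    have "a w - a (vxor w s) = \<i> * of_real (2 * \<theta>) * ham_eigenvalue (restrict_rows P s) w"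
      if "w \<in> vecs l" "s \<in> vecs l" for w s
      using ham_eigenvalue_diff_vxor[OF rows that] by (simp add: a_def algebra_simps)
    then show ?thesis by (simp cong: sum.cong)
  qed
  also have "\<dots> = (\<Sum>s\<in>vecs l. chi y s *
      (\<Sum>w\<in>vecs l. exp (\<i> * of_real (2 * \<theta>) * ham_eigenvalue (restrict_rows P s) w))) / (2 ^ l * 2 ^ l)"
    by (subst sum.swap) (simp add: sum_distrib_left)
  finally show ?thesis .
qed

lemma (in projector) marginal_prob_fourier:
  assumes rows: "\<forall>r\<in>set P. length r = l" and x: "x \<in> m ` vecs l"
  shows "complex_of_real (marginal_prob l P \<theta> m x) =
    of_nat (card kernel) * (\<Sum>s\<in>dual_map l m ` vecs l. chi x s *
      (\<Sum>w\<in>vecs l. exp (\<i> * of_real (2 * \<theta>) * ham_eigenvalue (restrict_rows P s) w)))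
    / (2 ^ l * 2 ^ l)"
proof -
  define Q where "Q s = (\<Sum>w\<in>vecs l. exp (\<i> * of_real (2 * \<theta>) * ham_eigenvalue (restrict_rows P s) w))" for s
  define F where "F = {y \<in> vecs l. m y = x}"
  have "complex_of_real (marginal_prob l P \<theta> m x) = (\<Sum>y\<in>F. (\<Sum>s\<in>vecs l. chi y s * Q s) / (2 ^ l * 2 ^ l))"
    unfolding marginal_prob_def F_def[symmetric] of_real_sum
    by (intro sum.cong refl) (simp add: F_def Q_def xprog_prob_fourier[OF rows])
  also have "\<dots> = (\<Sum>s\<in>vecs l. (\<Sum>y\<in>F. chi y s) * Q s) / (2 ^ l * 2 ^ l)"
    by (simp add: sum_divide_distrib[symmetric] sum_distrib_right) (rule sum.swap)
  also have "\<dots> = (\<Sum>s\<in>vecs l. if s \<in> annihilator l kernel then of_nat (card kernel) * (chi x s * Q s) else 0)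
      / (2 ^ l * 2 ^ l)"
    by (intro arg_cong2[where f = "(/)"] sum.cong refl) (simp add: F_def sum_fibre_chi[OF x])
  also have "\<dots> = of_nat (card kernel) * (\<Sum>s\<in>annihilator l kernel. chi x s * Q s) / (2 ^ l * 2 ^ l)"
  proof -
    have "annihilator l kernel \<subseteq> vecs l" by (auto simp: annihilator_def)
    then show ?thesis by (simp add: sum.If_cases inf.absorb2 sum_distrib_left)
  qed
  finally show ?thesis by (simp add: range_dual_map Q_def)
qed

theorem proposition5:
  fixes n l :: nat and P :: "bool list list" and \<theta> :: real
    and m :: "bool list \<Rightarrow> bool list" and x :: "bool list"
  assumes "length P = n" and "\<forall>row\<in>set P. length row = l"
    and "is_projector l m"
    and "x \<in> m ` vecs l"
  shows "complex_of_real (marginal_prob l P \<theta> m x) =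
    (\<Sum>s\<in>dual_map l m ` vecs l. (if dot x s then -1 else 1) * alpha l (restrict_rows P s) (2 * \<theta>))
      / of_nat (card (dual_map l m ` vecs l))"
proof -
  interpret projector l m using assms(3) by (rule projectorI)
  let ?S = "dual_map l m ` vecs l"
  let ?Q = "\<lambda>s. \<Sum>w\<in>vecs l. exp (\<i> * of_real (2 * \<theta>) * ham_eigenvalue (restrict_rows P s) w)"
  have alpha: "alpha l (restrict_rows P s) (2 * \<theta>) = ?Q s / 2 ^ l" for s
    using assms(2) by (intro alpha_eq_average) (simp add: restrict_rows_def)
  have "(\<Sum>s\<in>?S. (if dot x s then -1 else 1) * alpha l (restrict_rows P s) (2 * \<theta>))
      = (\<Sum>s\<in>?S. chi x s * ?Q s) / 2 ^ l"
    by (simp only: alpha chi_def times_divide_eq_right sum_divide_distrib[symmetric])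
  moreover have "of_nat (card kernel) * of_nat (card ?S) = (2 ^ l :: complex)"
    using card_kernel_mult_card_range_dual_map by (metis of_nat_mult of_nat_numeral of_nat_power)
  moreover have "card kernel \<noteq> 0" "card ?S \<noteq> 0"
    using card_kernel_mult_card_range_dual_map by (metis mult_is_0 power_not_zero zero_neq_numeral)+
  ultimately show ?thesis
    unfolding marginal_prob_fourier[OF assms(2,4)] by (simp add: field_simps)
qed

end
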